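(* Let $\mu=(p,q,r,s)\in\mathbb{R}^4$ with $(p,q,r)\neq(0,0,0)$. For all $\varepsilon>0$ and $K>0$ there exists a real triple $(x_1,x_2,x_3)\in\mathbb{R}^3$ with $x_1^2+x_2^2+x_3^2+x_1x_2x_3=px_1+qx_2+rx_3+s$ such that, for some labelling $\{i,j,k\}=\{1,2,3\}$, one has $-(2+\varepsilon)<x_i<-2$, $x_jx_k>0$, $|x_j|>K$ and $|x_k|>K$. *)

theory Defs
  imports Main "HOL.Real"
begin

end

theory Submission
  imports Defs Complex_Main "HOL-Library.Quadratic_Discriminant"
begin

text \<open>
  Fix the first coordinate at some \<open>t\<close> slightly below \<open>-2\<close>. The remaining equation
  \<open>y\<^sup>2 + z\<^sup>2 + t y z = q y + r z + c\<close> is a conic whose quadratic part is indefinite because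
  \<open>t\<^sup>2 > 4\<close>; read as a monic quadratic in \<open>z\<close>, its discriminant is a quadratic in \<open>y\<close> with
  leading coefficient \<open>t\<^sup>2 - 4 > 0\<close>. So for every large \<open>y\<close> there is a real root \<open>z\<close>, and
  the larger root is at least \<open>(r - t y)/2 \<ge> y - \<bar>r\<bar>/2\<close>, hence large as well.
\<close>

lemma quadratic_eventually_nonneg:
  fixes a b d :: real
  assumes "a > 0"
  shows "eventually (\<lambda>y. 0 \<le> a * y\<^sup>2 + b * y + d) at_top"
proof (rule eventually_at_top_linorder[THEN iffD2], intro exI allI impI)
  fix y assume y: "y \<ge> max 1 ((\<bar>b\<bar> + \<bar>d\<bar>) / a)"
  have "\<bar>b\<bar> + \<bar>d\<bar> \<le> a * y"
    using y assms by (simp add: pos_divide_le_eq mult.commute)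
  then have lin: "\<bar>d\<bar> \<le> a * y + b"
    by linarith
  have "a * y + b \<le> y * (a * y + b)"
    using y lin by (intro mult_right_mono[of 1 y, simplified]) auto
  then show "0 \<le> a * y\<^sup>2 + b * y + d"
    using lin by (simp add: power2_eq_square algebra_simps)
qed

lemma markov_type_solution_with_large_coordinates:
  fixes t p q r s K :: real
  assumes "t < -2"
  shows "\<exists>y z. K < y \<and> K < z \<and> t\<^sup>2 + y\<^sup>2 + z\<^sup>2 + t * y * z = p * t + q * y + r * z + s"
proof -
  define c where "c = p * t + s - t\<^sup>2"
  define D where "D y = discrim 1 (t * y - r) (y\<^sup>2 - q * y - c)" for y
  have D_eq: "D y = (t\<^sup>2 - 4) * y\<^sup>2 + (4 * q - 2 * t * r) * y + (r\<^sup>2 + 4 * c)" for y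
    by (simp add: D_def discrim_def power2_eq_square algebra_simps)
  have "2\<^sup>2 < (- t)\<^sup>2"
    using assms by (intro power_strict_mono) auto
  then have "t\<^sup>2 - 4 > 0"
    by simp
  then have "eventually (\<lambda>y. 0 \<le> D y \<and> K + \<bar>r\<bar> < y \<and> 0 < y) at_top"
    unfolding D_eq
    by (intro eventually_conj quadratic_eventually_nonneg eventually_gt_at_top)
  then obtain y where D: "0 \<le> D y" and y: "K + \<bar>r\<bar> < y" "0 < y"
    by (auto dest: eventually_happens)
  define z where "z = (- (t * y - r) + sqrt (D y)) / 2"
  have "1 * z\<^sup>2 + (t * y - r) * z + (y\<^sup>2 - q * y - c) = 0"
    using discriminant_nonneg[of 1 "t * y - r" "y\<^sup>2 - q * y - c" z] D
    by (simp add: z_def D_def)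
  then have equation: "t\<^sup>2 + y\<^sup>2 + z\<^sup>2 + t * y * z = p * t + q * y + r * z + s"
    by (simp add: c_def algebra_simps)
  have "2 * y \<le> - (t * y)"
    using mult_right_mono[of 2 "- t" y] assms y by simp
  then have "2 * K < r - t * y + sqrt (D y)"
    using y real_sqrt_ge_zero[OF D] abs_ge_minus_self[of r] by linarith
  then have "K < z"
    by (simp add: z_def)
  moreover have "K < y"
    using y(1) abs_ge_zero[of r] by linarith
  ultimately show ?thesis
    using equation by blast
qed

theorem lemma5p1:
  fixes p q r s :: real
  assumes "(p, q, r) \<noteq> (0, 0, 0)"
  shows "\<forall>\<epsilon>>0. \<forall>K>0. \<exists>x1 x2 x3 :: real.
           x1^2 + x2^2 + x3^2 + x1 * x2 * x3 = p * x1 + q * x2 + r * x3 + s \<and>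
           ((-(2 + \<epsilon>) < x1 \<and> x1 < -2 \<and> x2 * x3 > 0 \<and> \<bar>x2\<bar> > K \<and> \<bar>x3\<bar> > K) \<or>
            (-(2 + \<epsilon>) < x2 \<and> x2 < -2 \<and> x1 * x3 > 0 \<and> \<bar>x1\<bar> > K \<and> \<bar>x3\<bar> > K) \<or>
            (-(2 + \<epsilon>) < x3 \<and> x3 < -2 \<and> x1 * x2 > 0 \<and> \<bar>x1\<bar> > K \<and> \<bar>x2\<bar> > K))"
proof (intro allI impI)
  fix \<epsilon> K :: real
  assume "\<epsilon> > 0" "K > 0"
  define t where "t = -2 - \<epsilon> / 2"
  have t: "-(2 + \<epsilon>) < t" "t < -2"
    using \<open>\<epsilon> > 0\<close> by (auto simp: t_def)
  then obtain y z where "K < y" "K < z"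
    and equation: "t\<^sup>2 + y\<^sup>2 + z\<^sup>2 + t * y * z = p * t + q * y + r * z + s"
    using markov_type_solution_with_large_coordinates by blast
  with \<open>K > 0\<close> have "y * z > 0" "\<bar>y\<bar> > K" "\<bar>z\<bar> > K"
    by auto
  with t equation show "\<exists>x1 x2 x3 :: real.
           x1^2 + x2^2 + x3^2 + x1 * x2 * x3 = p * x1 + q * x2 + r * x3 + s \<and>
           ((-(2 + \<epsilon>) < x1 \<and> x1 < -2 \<and> x2 * x3 > 0 \<and> \<bar>x2\<bar> > K \<and> \<bar>x3\<bar> > K) \<or>
            (-(2 + \<epsilon>) < x2 \<and> x2 < -2 \<and> x1 * x3 > 0 \<and> \<bar>x1\<bar> > K \<and> \<bar>x3\<bar> > K) \<or>
            (-(2 + \<epsilon>) < x3 \<and> x3 < -2 \<and> x1 * x2 > 0 \<and> \<bar>x1\<bar> > K \<and> \<bar>x2\<bar> > K))"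
    by blast
qed

end
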